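(* Let $D$ be a distributive lattice with bottom and let $e,f,i,j\in D$ with $f<e$ and $j<i$. Then $\mathcal{V}_{e;f}\subseteq\mathcal{V}_{i;j}$ if and only if $e=f\vee(e\wedge i)$ and $f\wedge j=e\wedge j$.
   Context: A prime filter of $D$ is a nonempty, upward closed subset $F$ not containing the bottom, closed under binary meets, such that $x\vee y\in F$ implies $x\in F$ or $y\in F$. For $e\in D$, $\mathcal{V}_e$ is the set of prime filters of $D$ containing $e$, and for $f\le e$, $\mathcal{V}_{e;f}=\mathcal{V}_e\setminus\mathcal{V}_f$. *)

theory Defs
  imports Main
begin

definition prime_filter :: "'a::{distrib_lattice, order_bot} set \<Rightarrow> bool" where
  "prime_filter F \<longleftrightarrow>
     F \<noteq> {} \<and>
     (\<forall>x y. x \<in> F \<longrightarrow> x \<le> y \<longrightarrow> y \<in> F) \<and>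
     bot \<notin> F \<and>
     (\<forall>x y. x \<in> F \<longrightarrow> y \<in> F \<longrightarrow> inf x y \<in> F) \<and>
     (\<forall>x y. sup x y \<in> F \<longrightarrow> x \<in> F \<or> y \<in> F)"

definition V :: "'a::{distrib_lattice, order_bot} \<Rightarrow> 'a set set" where
  "V e = {F. prime_filter F \<and> e \<in> F}"

definition V2 :: "'a::{distrib_lattice, order_bot} \<Rightarrow> 'a \<Rightarrow> 'a set set" where
  "V2 e f = V e - V f"

end

theory Submission
  imports Defs
begin

text \<open>By the prime filter theorem, \<open>V\<close> is an order embedding of \<open>D\<close> into sets that turns
  meets into intersections and joins into unions. Hence
  \<open>V e - V f \<subseteq> V i - V j\<close> says exactly \<open>V e \<subseteq> V f \<union> V i\<close> and \<open>V e \<inter> V j \<subseteq> V f\<close>,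
  i.e. \<open>e \<le> f \<squnion> i\<close> and \<open>e \<sqinter> j \<le> f\<close>; with \<open>f \<le> e\<close> and distributivity these are the two
  stated equations.\<close>

definition filter_avoiding :: "'a::lattice \<Rightarrow> 'a set \<Rightarrow> bool" where
  "filter_avoiding b F \<longleftrightarrow>
     (\<forall>x y. x \<in> F \<longrightarrow> x \<le> y \<longrightarrow> y \<in> F) \<and>
     (\<forall>x y. x \<in> F \<longrightarrow> y \<in> F \<longrightarrow> inf x y \<in> F) \<and>
     b \<notin> F"

lemma filter_avoiding_Union_chain:
  assumes "C \<noteq> {}" and "chain\<^sub>\<subseteq> C" and "\<And>F. F \<in> C \<Longrightarrow> filter_avoiding b F"
  shows "filter_avoiding b (\<Union>C)"
  unfolding filter_avoiding_def
proof (intro conjI allI impI)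
  fix x y assume "x \<in> \<Union>C" "y \<in> \<Union>C"
  then obtain X Y where XY: "X \<in> C" "Y \<in> C" "x \<in> X" "y \<in> Y" by blast
  with \<open>chain\<^sub>\<subseteq> C\<close> have "X \<subseteq> Y \<or> Y \<subseteq> X" by (auto simp: chain_subset_def)
  with XY assms(3) show "inf x y \<in> \<Union>C" unfolding filter_avoiding_def by blast
qed (use assms(3) in \<open>unfold filter_avoiding_def; blast\<close>)+

lemma maximal_filter_avoiding_exists:
  fixes a b :: "'a::lattice"
  assumes "\<not> a \<le> b"
  obtains M where "a \<in> M" and "filter_avoiding b M"
    and "\<And>F. a \<in> F \<Longrightarrow> filter_avoiding b F \<Longrightarrow> M \<subseteq> F \<Longrightarrow> F = M"
proof -
  let ?A = "{F. a \<in> F \<and> filter_avoiding b F}"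
  have principal: "{x. a \<le> x} \<in> ?A"
    using assms by (auto simp: filter_avoiding_def intro: order_trans)
  have "\<forall>C\<in>chains ?A. \<exists>U\<in>?A. \<forall>X\<in>C. X \<subseteq> U"
  proof
    fix C assume "C \<in> chains ?A"
    show "\<exists>U\<in>?A. \<forall>X\<in>C. X \<subseteq> U"
    proof (cases "C = {}")
      case False
      with \<open>C \<in> chains ?A\<close> have "\<Union>C \<in> ?A"
        using filter_avoiding_Union_chain[of C b] by (auto simp: chains_def)
      then show ?thesis by blast
    qed (use principal in blast)
  qed
  from Zorn_Lemma2[OF this] that show thesis by blast
qed

text \<open>Otherwise the filter generated by \<open>M\<close> and \<open>x\<close> would still avoid \<open>b\<close>.\<close>

lemma maximal_filter_avoiding_meet_below:
  fixes b :: "'a::lattice"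
  assumes "a \<in> M" and M: "filter_avoiding b M"
    and max: "\<And>F. a \<in> F \<Longrightarrow> filter_avoiding b F \<Longrightarrow> M \<subseteq> F \<Longrightarrow> F = M"
    and "x \<notin> M"
  shows "\<exists>m\<in>M. inf m x \<le> b"
proof (rule ccontr)
  assume none: "\<not> (\<exists>m\<in>M. inf m x \<le> b)"
  let ?G = "{z. \<exists>m\<in>M. inf m x \<le> z}"
  have "filter_avoiding b ?G"
    unfolding filter_avoiding_def
  proof (intro conjI allI impI)
    fix u v assume "u \<in> ?G" "v \<in> ?G"
    then obtain m n where mn: "m \<in> M" "n \<in> M" "inf m x \<le> u" "inf n x \<le> v" by auto
    then have "inf (inf m n) x \<le> inf u v"
      by (meson inf_le1 inf_le2 le_inf_iff order_trans)
    with mn(1,2) M show "inf u v \<in> ?G" unfolding filter_avoiding_def by blast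
  next
    fix u v assume "u \<in> ?G" "u \<le> v"
    then show "v \<in> ?G" by (blast intro: order_trans)
  next
    show "b \<notin> ?G" using none by blast
  qed
  moreover have "M \<subseteq> ?G"
  proof
    fix m assume "m \<in> M"
    moreover have "inf m x \<le> m" by simp
    ultimately show "m \<in> ?G" by blast
  qed
  ultimately have "?G = M" using max \<open>a \<in> M\<close> by blast
  moreover have "inf a x \<le> x" by simp
  ultimately show False using \<open>a \<in> M\<close> \<open>x \<notin> M\<close> by blast
qed

lemma maximal_filter_avoiding_prime:
  fixes b :: "'a::distrib_lattice"
  assumes "a \<in> M" and M: "filter_avoiding b M"
    and max: "\<And>F. a \<in> F \<Longrightarrow> filter_avoiding b F \<Longrightarrow> M \<subseteq> F \<Longrightarrow> F = M"
    and "sup x y \<in> M"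
  shows "x \<in> M \<or> y \<in> M"
proof (rule ccontr)
  assume "\<not> (x \<in> M \<or> y \<in> M)"
  then obtain m n where mn: "m \<in> M" "n \<in> M" "inf m x \<le> b" "inf n y \<le> b"
    using maximal_filter_avoiding_meet_below[OF \<open>a \<in> M\<close> M max] by blast
  have "inf (inf m n) (sup x y) = sup (inf (inf m n) x) (inf (inf m n) y)"
    by (rule inf_sup_distrib1)
  also have "\<dots> \<le> b"
    using mn(3,4) by (meson inf_le1 inf_le2 le_inf_iff order_trans sup_least)
  finally have "b \<in> M"
    using M mn(1,2) \<open>sup x y \<in> M\<close> unfolding filter_avoiding_def by blast
  with M show False unfolding filter_avoiding_def by blast
qed

theorem prime_filter_separation:
  fixes a b :: "'a::{distrib_lattice, order_bot}"
  assumes "\<not> a \<le> b"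
  obtains F where "prime_filter F" and "a \<in> F" and "b \<notin> F"
proof -
  obtain M where "a \<in> M" and M: "filter_avoiding b M"
    and max: "\<And>F. a \<in> F \<Longrightarrow> filter_avoiding b F \<Longrightarrow> M \<subseteq> F \<Longrightarrow> F = M"
    using maximal_filter_avoiding_exists[OF assms] by blast
  have "bot \<notin> M"
    using M unfolding filter_avoiding_def by (metis bot_least)
  with \<open>a \<in> M\<close> M maximal_filter_avoiding_prime[OF \<open>a \<in> M\<close> M max]
  have "prime_filter M" and "b \<notin> M"
    unfolding prime_filter_def filter_avoiding_def by blast+
  with \<open>a \<in> M\<close> that show thesis by blast
qed

lemma prime_filter_inf_iff:
  assumes "prime_filter F"
  shows "inf x y \<in> F \<longleftrightarrow> x \<in> F \<and> y \<in> F"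
  using assms unfolding prime_filter_def by (meson inf_le1 inf_le2)

lemma prime_filter_sup_iff:
  assumes "prime_filter F"
  shows "sup x y \<in> F \<longleftrightarrow> x \<in> F \<or> y \<in> F"
  using assms unfolding prime_filter_def by (meson sup_ge1 sup_ge2)

lemma V_inf: "V (inf a b) = V a \<inter> V b"
  by (auto simp: V_def prime_filter_inf_iff)

lemma V_sup: "V (sup a b) = V a \<union> V b"
  by (auto simp: V_def prime_filter_sup_iff)

lemma V_subset_iff: "V a \<subseteq> V b \<longleftrightarrow> a \<le> b"
proof
  assume "V a \<subseteq> V b"
  show "a \<le> b"
  proof (rule ccontr)
    assume "\<not> a \<le> b"
    then obtain F where "prime_filter F" "a \<in> F" "b \<notin> F"
      by (rule prime_filter_separation)
    with \<open>V a \<subseteq> V b\<close> show False by (auto simp: V_def)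
  qed
qed (auto simp: V_def prime_filter_def)

lemma V2_subset_V2_iff: "V2 e f \<subseteq> V2 i j \<longleftrightarrow> e \<le> sup f i \<and> inf e j \<le> f"
proof -
  have "V2 e f \<subseteq> V2 i j \<longleftrightarrow> V e \<subseteq> V f \<union> V i \<and> V e \<inter> V j \<subseteq> V f"
    unfolding V2_def by blast
  also have "\<dots> \<longleftrightarrow> e \<le> sup f i \<and> inf e j \<le> f"
    by (simp only: V_sup [symmetric] V_inf [symmetric] V_subset_iff)
  finally show ?thesis .
qed

theorem lemma2p8:
  fixes e f i j :: "'a::{distrib_lattice, order_bot}"
  assumes "f < e" and "j < i"
  shows "V2 e f \<subseteq> V2 i j \<longleftrightarrow> (e = sup f (inf e i) \<and> inf f j = inf e j)"
proof -
  have "f \<le> e" using assms(1) by simp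
  then have "sup f (inf e i) = inf e (sup f i)"
    by (simp add: inf_sup_distrib1 inf.absorb2)
  then have "e \<le> sup f i \<longleftrightarrow> e = sup f (inf e i)"
    by (metis inf.absorb_iff1)
  moreover have "inf e j \<le> f \<longleftrightarrow> inf f j = inf e j"
  proof
    assume "inf e j \<le> f"
    with \<open>f \<le> e\<close> show "inf f j = inf e j"
      by (simp add: antisym inf.coboundedI1 inf_mono)
  qed (metis inf_le1)
  ultimately show ?thesis unfolding V2_subset_V2_iff by blast
qed

end
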